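(* For integers $n\ge0$ and $k\ge0$ define $$F(n,k)=(-1)^k(4n+1)\frac{(\frac12)_n^3(\frac12)_{n+k}}{(1)_n^3\,(1)_{n-k}\,(\frac12)_k^2},\qquad G(n,k)=(-1)^{k-1}\frac{4(\frac12)_n^3(\frac12)_{n+k-1}}{(1)_{n-1}^3\,(1)_{n-k}\,(\frac12)_k^2},$$ with the convention $1/(1)_j=0$ for negative integers $j$ (so $F(n,k)=0$ for $k>n$ and $G(0,k)=0$ for $k>0$). Then for every $n\in\mathbb N$ and every positive integer $k$, $$(2k-1)F(n,k-1)-2kF(n,k)=G(n+1,k)-G(n,k),$$ and for every $m\in\mathbb N$, $$\sum_{n=0}^{m}F(n,0)=\frac{4^m}{\binom{2m}{m}}F(m,m)+\sum_{k=1}^m\frac{4^{k-1}\,G(m+1,k)}{(2k-1)\binom{2k-2}{k-1}}.$$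
   Context: $(x)_k=x(x+1)\cdots(x+k-1)$ is the Pochhammer symbol, with $(x)_0=1$; $(1)_j=j!$ for $j\ge0$. *)

theory Defs
  imports Complex_Main
begin

definition recip_poch1 :: "int \<Rightarrow> real" where
  "recip_poch1 j = (if j < 0 then 0 else 1 / fact (nat j))"

definition F :: "nat \<Rightarrow> nat \<Rightarrow> real" where
  "F n k = (-1) ^ k * (4 * real n + 1) * pochhammer (1/2) n ^ 3 * pochhammer (1/2) (n + k)
     * recip_poch1 (int n) ^ 3 * recip_poch1 (int n - int k) / (pochhammer (1/2) k) ^ 2"

text \<open>(-1)^(k-1) is written as -((-1)^k). G(n,k) is only used for k \<ge> 1.\<close>
definition G :: "nat \<Rightarrow> nat \<Rightarrow> real" where
  "G n k = - ((-1) ^ k) * 4 * pochhammer (1/2) n ^ 3 * pochhammer (1/2) (n + k - 1)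
     * recip_poch1 (int n - 1) ^ 3 * recip_poch1 (int n - int k) / (pochhammer (1/2) k) ^ 2"

end

theory Submission
  imports Defs
begin

text \<open>
  (F, G) is a WZ pair: the quotients of F n (k + 1), G n (k + 1) and G (n + 1) (k + 1) by F n k are
  rational in n and k, so the first identity reduces to a polynomial identity.  For the second,
  weight the WZ equation at k + 1 by w k / (2k + 1), where w k = 4^k / binom(2k, k) satisfies
  (2k + 1) w (k + 1) = 2 (k + 1) w k.  The left-hand sides then telescope in k to
  F n 0 - w m F n m, and summing over n = 0..m telescopes the right-hand sides in n; finally
  F n m = 0 for n < m and G 0 k = 0.
\<close>

lemma recip_poch1_pred:
  assumes "0 \<le> m"
  shows "recip_poch1 (m - 1) = of_int m * recip_poch1 m"
proof (cases "m = 0")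
  case False
  with assms have "nat m = Suc (nat (m - 1))"
    by simp
  with assms show ?thesis
    by (simp add: recip_poch1_def)
qed (simp add: recip_poch1_def)

lemma recip_poch1_neg: "j < 0 \<Longrightarrow> recip_poch1 j = 0"
  by (simp add: recip_poch1_def)

lemma recip_poch1_diff_Suc:
  "recip_poch1 (int n - int (Suc j)) = (real n - real j) * recip_poch1 (int n - int j)"
proof (cases "j \<le> n")
  case True
  then show ?thesis using recip_poch1_pred[of "int n - int j"] by (simp add: algebra_simps)
qed (simp add: recip_poch1_neg)

lemma pochhammer_half_Suc: "pochhammer (1/2::real) (Suc k) = pochhammer (1/2) k * (real k + 1/2)"
  by (simp add: pochhammer_Suc)

lemma pochhammer_half_nonzero [simp]: "pochhammer (1/2::real) k \<noteq> 0"
  by (simp add: pochhammer_eq_0_iff)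

lemma F_eq_0: "n < k \<Longrightarrow> F n k = 0"
  by (simp add: F_def recip_poch1_neg)

lemma G_0_left: "G 0 k = 0"
  by (simp add: G_def recip_poch1_neg)

text \<open>The factor n - j makes these hold also for j \<ge> n, where both sides vanish.\<close>

lemma F_Suc:
  "(real j + 1/2)^2 * F n (Suc j) = - (real n + real j + 1/2) * (real n - real j) * F n j"
  unfolding F_def recip_poch1_diff_Suc add_Suc_right pochhammer_half_Suc
  by (simp add: divide_simps power_mult_distrib)

lemma G_Suc_eq_F:
  "(4 * real n + 1) * (real j + 1/2)^2 * G n (Suc j) = 4 * real n ^ 3 * (real n - real j) * F n j"
  unfolding F_def G_def recip_poch1_diff_Suc pochhammer_half_Suc
    recip_poch1_pred[of "int n", simplified]
  by (simp add: divide_simps power_mult_distrib)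

lemma G_Suc_Suc_eq_F:
  "(4 * real n + 1) * (real j + 1/2)^2 * G (Suc n) (Suc j)
     = 4 * (real n + 1/2)^3 * (real n + real j + 1/2) * F n j"
  unfolding F_def G_def
  by (simp add: pochhammer_half_Suc divide_simps power_mult_distrib)

lemma F_G_WZ_pair:
  "(2 * real (Suc j) - 1) * F n j - 2 * real (Suc j) * F n (Suc j)
     = G (Suc n) (Suc j) - G n (Suc j)"
proof -
  define D where "D = (4 * real n + 1) * (real j + 1/2)^2"
  have "D \<noteq> 0"
    unfolding D_def by (simp add: add_pos_nonneg)
  moreover have "D * ((2 * real (Suc j) - 1) * F n j - 2 * real (Suc j) * F n (Suc j))
      = D * (G (Suc n) (Suc j) - G n (Suc j))"
    using F_Suc[of j n] G_Suc_eq_F[of n j] G_Suc_Suc_eq_F[of n j]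
    unfolding D_def of_nat_Suc by algebra
  ultimately show ?thesis
    by simp
qed

lemma central_binomial_Suc:
  "Suc k * (2 * Suc k choose Suc k) = 2 * (2 * k + 1) * (2 * k choose k)"
proof -
  have "Suc k * (2 * Suc k choose Suc k) = Suc (Suc (2 * k)) * (Suc (2 * k) choose k)"
    using Suc_times_binomial[of k "Suc (2 * k)"] by simp
  also have "(Suc (2 * k) choose k) = (Suc (2 * k) choose Suc k)"
    using binomial_symmetric[of k "Suc (2 * k)"] by simp
  also have "Suc (Suc (2 * k)) * \<dots> = 2 * (Suc k * (Suc (2 * k) choose Suc k))"
    by simp
  also have "Suc k * (Suc (2 * k) choose Suc k) = Suc (2 * k) * (2 * k choose k)"
    by (rule Suc_times_binomial)
  finally show ?thesis
    by simp
qed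

definition central_weight :: "nat \<Rightarrow> real" where
  "central_weight k = 4 ^ k / real ((2 * k) choose k)"

lemma central_weight_Suc:
  "(2 * real k + 1) * central_weight (Suc k) = 2 * real (Suc k) * central_weight k"
proof -
  define C C' where "C = real (2 * k choose k)" and "C' = real (2 * Suc k choose Suc k)"
  have central: "real (Suc k) * C' = 2 * (2 * real k + 1) * C"
    unfolding C_def C'_def using arg_cong[OF central_binomial_Suc[of k], of real]
    by (simp only: of_nat_mult of_nat_add of_nat_numeral of_nat_1)
  have "C > 0" "C' > 0"
    unfolding C_def C'_def by (simp_all del: binomial_Suc_Suc)
  moreover have weights: "central_weight (Suc k) = 4 * 4 ^ k / C'" "central_weight k = 4 ^ k / C"
    unfolding central_weight_def C_def C'_def by simp_all
  ultimately show ?thesis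
    unfolding weights using central by (simp add: divide_simps) algebra
qed

lemma central_weight_difference:
  "central_weight k / (2 * real k + 1) * ((2 * real (Suc k) - 1) * a - 2 * real (Suc k) * b)
     = central_weight k * a - central_weight (Suc k) * b"
  using central_weight_Suc[of k] by (simp add: field_simps)

lemma F_0_telescoped:
  "F n 0 = central_weight m * F n m
     + (\<Sum>k<m. central_weight k / (2 * real k + 1) * (G (Suc n) (Suc k) - G n (Suc k)))"
proof -
  have "(\<Sum>k<m. central_weight k / (2 * real k + 1) * (G (Suc n) (Suc k) - G n (Suc k)))
      = (\<Sum>k<m. central_weight k * F n k - central_weight (Suc k) * F n (Suc k))"
    by (simp flip: F_G_WZ_pair central_weight_difference)
  also have "\<dots> = F n 0 - central_weight m * F n m"
    using sum_lessThan_telescope'[of "\<lambda>k. central_weight k * F n k"]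
    by (simp add: central_weight_def)
  finally show ?thesis
    by simp
qed

lemma sum_F_0:
  "(\<Sum>n=0..m. F n 0) = central_weight m * F m m
     + (\<Sum>k<m. central_weight k / (2 * real k + 1) * G (Suc m) (Suc k))"
proof -
  have F_m: "(\<Sum>n=0..m. F n m) = F m m"
    by (cases m) (simp_all add: F_eq_0)
  have G_telescope: "(\<Sum>n=0..m. G (Suc n) (Suc k) - G n (Suc k)) = G (Suc m) (Suc k)" for k
    using sum_Suc_diff[of 0 m "\<lambda>n. G n (Suc k)"] by (simp add: G_0_left)
  have "(\<Sum>n=0..m. F n 0) = (\<Sum>n=0..m. central_weight m * F n m
      + (\<Sum>k<m. central_weight k / (2 * real k + 1) * (G (Suc n) (Suc k) - G n (Suc k))))"
    by (rule sum.cong[OF refl F_0_telescoped])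
  also have "\<dots> = central_weight m * (\<Sum>n=0..m. F n m)
      + (\<Sum>k<m. central_weight k / (2 * real k + 1)
            * (\<Sum>n=0..m. G (Suc n) (Suc k) - G n (Suc k)))"
    by (simp only: sum.distrib sum_distrib_left sum.swap[of _ "{0..m}"])
  finally show ?thesis
    by (simp only: F_m G_telescope)
qed

theorem mainTheorem12:
  shows "(\<forall>n k. k \<ge> 1 \<longrightarrow>
            (2 * real k - 1) * F n (k - 1) - 2 * real k * F n k = G (n + 1) k - G n k)
       \<and> (\<forall>m. (\<Sum>n=0..m. F n 0) =
            4 ^ m / real ((2 * m) choose m) * F m m
            + (\<Sum>k=1..m. 4 ^ (k - 1) * G (m + 1) k
                 / ((2 * real k - 1) * real ((2 * k - 2) choose (k - 1)))))"
proof (intro conjI allI impI)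
  fix n k :: nat
  assume "k \<ge> 1"
  then obtain j where "k = Suc j"
    using not0_implies_Suc by fastforce
  then show "(2 * real k - 1) * F n (k - 1) - 2 * real k * F n k = G (n + 1) k - G n k"
    using F_G_WZ_pair[of j n] by simp
next
  fix m :: nat
  show "(\<Sum>n=0..m. F n 0) = 4 ^ m / real ((2 * m) choose m) * F m m
          + (\<Sum>k=1..m. 4 ^ (k - 1) * G (m + 1) k
               / ((2 * real k - 1) * real ((2 * k - 2) choose (k - 1))))"
    unfolding sum_F_0 by (simp add: sum.atLeast1_atMost_eq central_weight_def ac_simps)
qed

end
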